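(* For every integer $s\ge 3$ there is a positive constant $c$ depending only on $s$ such that for all sufficiently large $n$, $$ f_{s,s+1}^{(2)}(n) \ge c\left(\frac{n\log n}{\log\log n}\right)^{1/2}. $$ That is, every $K_{s+1}$-free graph on $n$ vertices contains a set of at least $c\left(\frac{n\log n}{\log\log n}\right)^{1/2}$ vertices inducing no $K_s$.
   Context: For integers $2\le s<t$ and $n\ge 0$, $f_{s,t}^{(2)}(n)$ is the minimum, over all graphs $G$ on $n$ vertices containing no complete graph $K_t$, of the maximum size of a vertex subset $W\subseteq V(G)$ such that the induced subgraph $G[W]$ contains no $K_s$. All logarithms are natural logarithms. *)

theory Defs
  imports Complex_Main
begin

definition simple_graph :: "nat \<Rightarrow> (nat \<Rightarrow> nat \<Rightarrow> bool) \<Rightarrow> bool" where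
  "simple_graph n E \<longleftrightarrow> (\<forall>x y. E x y \<longrightarrow> E y x) \<and> (\<forall>x. \<not> E x x)
      \<and> (\<forall>x y. E x y \<longrightarrow> x < n \<and> y < n)"

definition is_clique :: "(nat \<Rightarrow> nat \<Rightarrow> bool) \<Rightarrow> nat set \<Rightarrow> bool" where
  "is_clique E K \<longleftrightarrow> (\<forall>x\<in>K. \<forall>y\<in>K. x \<noteq> y \<longrightarrow> E x y)"

definition contains_K :: "(nat \<Rightarrow> nat \<Rightarrow> bool) \<Rightarrow> nat set \<Rightarrow> nat \<Rightarrow> bool" where
  "contains_K E W t \<longleftrightarrow> (\<exists>K. K \<subseteq> W \<and> card K = t \<and> is_clique E K)"

definition max_Ks_free :: "nat \<Rightarrow> (nat \<Rightarrow> nat \<Rightarrow> bool) \<Rightarrow> nat \<Rightarrow> nat" where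
  "max_Ks_free n E s = Max {card W | W. W \<subseteq> {0..<n} \<and> \<not> contains_K E W s}"

definition f2 :: "nat \<Rightarrow> nat \<Rightarrow> nat \<Rightarrow> nat" where
  "f2 s t n = Min {max_Ks_free n E s | E. simple_graph n E \<and> \<not> contains_K E {0..<n} t}"

end

theory Submission
  imports Defs "HOL-Real_Asymp.Real_Asymp"
begin

text \<open>Let D = (n log n / log log n)^(1/2). A vertex of degree above D has a K_s-free
  neighbourhood of that size, so assume all degrees are at most D. For the uniformly random
  independent set I, every vertex v then satisfies D P(v in I) + E|I n N(v)| >= b with
  b = log D / (36 s log log D): conditioned on I outside N(v) + v, either I contains v or
  I n N(v) is a uniform independent set of a K_s-free graph on at most D vertices. Such a
  graph either has few independent sets, which makes v in I likely, or so many that most of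
  them have at least 2b elements: with few vertices, small sets are too rare; with many
  vertices, the Erdos-Szekeres bound gives an independent set of size (log D)^2 and hence
  2^((log D)^2) independent subsets. Summing over v gives n b <= 2 D E|I|, an independent set
  of size of order D / s.\<close>

section \<open>Independent sets and cliques\<close>

definition indep :: "(nat \<Rightarrow> nat \<Rightarrow> bool) \<Rightarrow> nat set \<Rightarrow> bool" where
  "indep E T \<longleftrightarrow> (\<forall>x\<in>T. \<forall>y\<in>T. \<not> E x y)"

definition indep_sets :: "(nat \<Rightarrow> nat \<Rightarrow> bool) \<Rightarrow> nat set \<Rightarrow> nat set set" where
  "indep_sets E A = {T. T \<subseteq> A \<and> indep E T}"

lemma finite_indep_sets: "finite A \<Longrightarrow> finite (indep_sets E A)"
  unfolding indep_sets_def by (rule rev_finite_subset[of "Pow A"]) auto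

lemma empty_in_indep_sets: "{} \<in> indep_sets E A"
  unfolding indep_sets_def indep_def by simp

lemma indep_not_contains_K:
  assumes "indep E W" and "t \<ge> 2"
  shows "\<not> contains_K E W t"
proof
  assume "contains_K E W t"
  then obtain K where K: "K \<subseteq> W" "card K = t" "is_clique E K"
    unfolding contains_K_def by blast
  then have "finite K" using assms(2) card.infinite by fastforce
  moreover have "\<forall>a\<in>K. \<forall>b\<in>K. a = b"
    using K assms(1) unfolding is_clique_def indep_def by blast
  ultimately have "card K \<le> 1" using card_le_Suc0_iff_eq by auto
  then show False using K(2) assms(2) by simp
qed

lemma not_contains_K_neighbourhood:
  assumes sym: "\<forall>x y. E x y \<longrightarrow> E y x" and irr: "\<forall>x. \<not> E x x"
    and "v \<in> V" and Y: "Y \<subseteq> V \<inter> {u. E v u}" and noK: "\<not> contains_K E V (Suc r)"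
  shows "\<not> contains_K E Y r"
proof
  assume "contains_K E Y r"
  then obtain K where K: "K \<subseteq> Y" "card K = r" "is_clique E K" "finite K"
  proof (cases "r = 0")
    case True
    then show ?thesis using that[of "{}"] by (simp add: is_clique_def)
  next
    case False
    obtain K where "K \<subseteq> Y" "card K = r" "is_clique E K"
      using \<open>contains_K E Y r\<close> unfolding contains_K_def by blast
    moreover have "finite K" using False \<open>card K = r\<close> card_ge_0_finite by blast
    ultimately show ?thesis using that by blast
  qed
  have "v \<notin> K" using K(1) Y irr by auto
  then have "card (insert v K) = Suc r" using K(2,4) by simp
  moreover have "insert v K \<subseteq> V" using K(1) Y \<open>v \<in> V\<close> by auto
  moreover have "is_clique E (insert v K)"
    using K(1,3) Y sym unfolding is_clique_def by blast
  ultimately show False using noK unfolding contains_K_def by blast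
qed

lemma greedy_indep_set:
  assumes sym: "\<forall>x y. E x y \<longrightarrow> E y x" and irr: "\<forall>x. \<not> E x x"
    and "finite X" and "\<forall>v\<in>X. card {u\<in>X. E v u} \<le> d"
  shows "\<exists>T\<subseteq>X. indep E T \<and> card X \<le> card T * (d + 1)"
  using assms(3,4)
proof (induction "card X" arbitrary: X rule: less_induct)
  case less
  show ?case
  proof (cases "X = {}")
    case True
    then show ?thesis by (auto simp: indep_def)
  next
    case False
    then obtain v where v: "v \<in> X" by auto
    define Y where "Y = insert v {u\<in>X. E v u}"
    define X' where "X' = X - Y"
    have "card {u\<in>X. E v u} \<le> d" using less.prems v by auto
    then have cY: "card Y \<le> d + 1"
      unfolding Y_def using less.prems(1) by (simp add: card_insert_if)
    have "card X \<le> card (X' \<union> Y)"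
      using less.prems(1) by (intro card_mono) (auto simp: X'_def Y_def)
    also have "\<dots> \<le> card X' + card Y" by (rule card_Un_le)
    finally have cX: "card X \<le> card X' + card Y" .
    have "card X' < card X"
      using v less.prems(1) unfolding X'_def Y_def by (intro psubset_card_mono) auto
    moreover have "\<forall>w\<in>X'. card {u\<in>X'. E w u} \<le> d"
    proof
      fix w assume "w \<in> X'"
      then have "card {u\<in>X. E w u} \<le> d" using less.prems by (auto simp: X'_def)
      moreover have "card {u\<in>X'. E w u} \<le> card {u\<in>X. E w u}"
        using less.prems(1) by (intro card_mono) (auto simp: X'_def)
      ultimately show "card {u\<in>X'. E w u} \<le> d" by linarith
    qed
    ultimately obtain T where T: "T \<subseteq> X'" "indep E T" "card X' \<le> card T * (d + 1)"
      using less.hyps less.prems(1) by (metis X'_def finite_Diff)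
    have "v \<notin> T" using T(1) by (auto simp: X'_def Y_def)
    moreover have "finite T" using T(1) less.prems(1) finite_subset by (auto simp: X'_def)
    moreover have "indep E (insert v T)"
      using T irr sym unfolding indep_def X'_def Y_def by auto
    moreover have "insert v T \<subseteq> X" using T(1) v by (auto simp: X'_def)
    ultimately show ?thesis using T(3) cX cY by (intro exI[of _ "insert v T"]) auto
  qed
qed

text \<open>The Erdos-Szekeres bound \<open>R(r + 1, t) \<le> t\<^sup>r\<close>: the neighbourhood of a vertex of
  degree at least \<open>t\<^sup>r\<^sup>-\<^sup>1\<close> carries no \<open>K\<^sub>r\<close>, and otherwise the greedy bound applies.\<close>

lemma ramsey_indep_set:
  assumes sym: "\<forall>x y. E x y \<longrightarrow> E y x" and irr: "\<forall>x. \<not> E x x"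
    and "finite X" and "t ^ r \<le> card X" and "\<not> contains_K E X (Suc r)"
  shows "\<exists>T\<subseteq>X. indep E T \<and> t \<le> card T"
  using assms(3-5)
proof (induction r arbitrary: X)
  case 0
  then obtain x where "x \<in> X" by fastforce
  then have "contains_K E X (Suc 0)"
    unfolding contains_K_def is_clique_def by (intro exI[of _ "{x}"]) auto
  with 0 show ?case by simp
next
  case (Suc r)
  show ?case
  proof (cases "\<exists>v\<in>X. t ^ r \<le> card {u\<in>X. E v u}")
    case True
    then obtain v where v: "v \<in> X" "t ^ r \<le> card {u\<in>X. E v u}" by blast
    have "{u\<in>X. E v u} \<subseteq> X \<inter> {u. E v u}" by blast
    then have "\<not> contains_K E {u\<in>X. E v u} (Suc r)"
      by (rule not_contains_K_neighbourhood[OF sym irr v(1) _ Suc.prems(3)])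
    moreover have "finite {u\<in>X. E v u}" using Suc.prems(1) by simp
    ultimately obtain T where "T \<subseteq> {u\<in>X. E v u}" "indep E T" "t \<le> card T"
      using Suc.IH v(2) by blast
    then show ?thesis by blast
  next
    case False
    then have "\<forall>v\<in>X. card {u\<in>X. E v u} \<le> t ^ r - 1" by fastforce
    from greedy_indep_set[OF sym irr Suc.prems(1) this] obtain T where
      T: "T \<subseteq> X" "indep E T" "card X \<le> card T * (t ^ r - 1 + 1)" by blast
    show ?thesis
    proof (cases "t = 0")
      case True
      then show ?thesis using T by auto
    next
      case False
      then have "card X \<le> card T * t ^ r" using T(3) by simp
      then have "t * t ^ r \<le> card T * t ^ r" using Suc.prems(2) by (metis power_Suc le_trans)
      moreover have "0 < t ^ r" using False by simp
      ultimately have "t \<le> card T" by (meson mult_le_cancel2 not_le)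
      then show ?thesis using T by blast
    qed
  qed
qed

section \<open>Counting independent sets\<close>

lemma card_subsets_card_le:
  assumes "finite X"
  shows "card {T. T \<subseteq> X \<and> card T \<le> k} \<le> (card X + 1) ^ k"
proof (induction k)
  case 0
  have "{T. T \<subseteq> X \<and> card T \<le> 0} \<subseteq> {{}}"
    using assms by (auto dest: finite_subset)
  then have "card {T. T \<subseteq> X \<and> card T \<le> 0} \<le> card {{} :: 'a set}"
    by (intro card_mono) simp_all
  then show ?case by simp
next
  case (Suc k)
  define S where "S = {T. T \<subseteq> X \<and> card T \<le> k}"
  have fS: "finite S" unfolding S_def by (rule rev_finite_subset[of "Pow X"]) (auto simp: assms)
  have "{T. T \<subseteq> X \<and> card T \<le> Suc k} \<subseteq> S \<union> (\<lambda>(a, T). insert a T) ` (X \<times> S)"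
  proof
    fix T assume T: "T \<in> {T. T \<subseteq> X \<and> card T \<le> Suc k}"
    show "T \<in> S \<union> (\<lambda>(a, T). insert a T) ` (X \<times> S)"
    proof (cases "card T \<le> k")
      case True
      then show ?thesis using T by (simp add: S_def)
    next
      case False
      then have "card T = Suc k" using T by auto
      then obtain a where a: "a \<in> T" by (metis card.empty ex_in_conv nat.distinct(1))
      have "finite T" using T assms finite_subset by auto
      then have "card (T - {a}) = k" using a \<open>card T = Suc k\<close> by simp
      then have "(a, T - {a}) \<in> X \<times> S" using T a by (auto simp: S_def)
      moreover have "T = insert a (T - {a})" using a by auto
      ultimately show ?thesis by (metis (no_types, lifting) UnI2 case_prod_conv image_eqI)
    qed
  qed
  then have "card {T. T \<subseteq> X \<and> card T \<le> Suc k}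
      \<le> card (S \<union> (\<lambda>(a, T). insert a T) ` (X \<times> S))"
    using fS assms by (intro card_mono) auto
  also have "\<dots> \<le> card S + card ((\<lambda>(a, T). insert a T) ` (X \<times> S))" by (rule card_Un_le)
  also have "\<dots> \<le> card S + card (X \<times> S)"
    using card_image_le[of "X \<times> S" "\<lambda>(a, T). insert a T"] fS assms by simp
  also have "\<dots> = card S * (card X + 1)" by (simp add: card_cartesian_product)
  also have "\<dots> \<le> (card X + 1) ^ k * (card X + 1)"
    using Suc.IH by (intro mult_right_mono) (auto simp: S_def)
  finally show ?case by (simp add: mult.commute)
qed

lemma sum_card_indep_sets_ge:
  assumes "finite X"
  shows "real k * (real (card (indep_sets E X)) - (real (card X) + 1) ^ k)
           \<le> (\<Sum>T\<in>indep_sets E X. real (card T))"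
proof -
  define A where "A = {T\<in>indep_sets E X. k \<le> card T}"
  define B where "B = {T\<in>indep_sets E X. card T < k}"
  have fin: "finite (indep_sets E X)" using finite_indep_sets[OF assms] .
  have "card B \<le> card {T. T \<subseteq> X \<and> card T \<le> k}"
    using assms by (intro card_mono) (auto simp: B_def indep_sets_def)
  also have "\<dots> \<le> (card X + 1) ^ k" using card_subsets_card_le[OF assms] .
  finally have "real (card B) \<le> real ((card X + 1) ^ k)" by (simp only: of_nat_le_iff)
  then have B: "real (card B) \<le> (real (card X) + 1) ^ k" by (simp add: add.commute)
  have "indep_sets E X = A \<union> B" "A \<inter> B = {}" by (auto simp: A_def B_def)
  then have "card (indep_sets E X) = card A + card B" using fin by (simp add: card_Un_disjoint)
  with B have "real (card (indep_sets E X)) - (real (card X) + 1) ^ k \<le> real (card A)"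
    by simp
  then have "real k * (real (card (indep_sets E X)) - (real (card X) + 1) ^ k) \<le> real k * card A"
    by (intro mult_left_mono) auto
  also have "\<dots> = (\<Sum>T\<in>A. real k)" by simp
  also have "\<dots> \<le> (\<Sum>T\<in>A. real (card T))" by (intro sum_mono) (auto simp: A_def)
  also have "\<dots> \<le> (\<Sum>T\<in>indep_sets E X. real (card T))"
    using fin by (intro sum_mono2) (auto simp: A_def)
  finally show ?thesis .
qed

lemma two_pow_card_le_card_indep_sets:
  assumes "finite X" and "T \<in> indep_sets E X"
  shows "2 ^ card T \<le> card (indep_sets E X)"
proof -
  have "Pow T \<subseteq> indep_sets E X" using assms(2) unfolding indep_sets_def indep_def by auto
  then have "card (Pow T) \<le> card (indep_sets E X)"
    using finite_indep_sets[OF assms(1)] by (intro card_mono) auto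
  moreover have "finite T" using assms finite_subset unfolding indep_sets_def by auto
  ultimately show ?thesis by (simp add: card_Pow)
qed

section \<open>Local occupancy\<close>

text \<open>The constant 5184 = 72^2 is what makes the occupancy at least 1.\<close>

definition large_degree :: "nat \<Rightarrow> real \<Rightarrow> bool" where
  "large_degree s D \<longleftrightarrow> (let L = ln D in
     0 < D \<and> 2 * L \<le> D \<and> 1 \<le> ln L \<and> 2 ^ s \<le> L \<and> 5184 * s\<^sup>2 \<le> L \<and>
     L / 4 + 2 \<le> L - ln 2 - ln L \<and> L * (L + 1) / 12 + 2 \<le> L\<^sup>2 / 4)"

definition occupancy :: "nat \<Rightarrow> real \<Rightarrow> real" where
  "occupancy s D = ln D / (36 * s * ln (ln D))"

lemma occupancy_ge_one:
  assumes "large_degree s D" and "s \<ge> 1"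
  shows "1 \<le> occupancy s D"
proof -
  define L where "L = ln D"
  have L: "1 \<le> ln L" "5184 * s\<^sup>2 \<le> L" "2 ^ s \<le> L"
    using assms(1) unfolding large_degree_def Let_def L_def by auto
  have "(1::real) \<le> 2 ^ s" by simp
  then have "1 \<le> L" using L(3) by linarith
  have "ln (sqrt L) \<le> sqrt L - 1" using \<open>1 \<le> L\<close> by (intro ln_le_minus_one) simp
  then have "ln L \<le> 2 * sqrt L" using \<open>1 \<le> L\<close> by (simp add: ln_sqrt)
  have "72 * s \<le> sqrt L" using L(2) by (intro real_le_rsqrt) (simp add: power_mult_distrib)
  have "36 * s * ln L \<le> 36 * s * (2 * sqrt L)"
    using \<open>ln L \<le> 2 * sqrt L\<close> by (intro mult_left_mono) auto
  also have "\<dots> = (72 * s) * sqrt L" by simp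
  also have "\<dots> \<le> sqrt L * sqrt L"
    using \<open>72 * s \<le> sqrt L\<close> \<open>1 \<le> L\<close> by (intro mult_right_mono) auto
  also have "\<dots> = L" using \<open>1 \<le> L\<close> by simp
  finally have "36 * s * ln L \<le> L" .
  moreover have "0 < 36 * s * ln L" using L(1) assms(2) by simp
  ultimately show ?thesis unfolding occupancy_def L_def[symmetric] by simp
qed

lemma occupancy_le:
  assumes "large_degree s D" and "s \<ge> 1"
  shows "occupancy s D \<le> ln D / 36"
proof -
  have "1 \<le> ln (ln D)" "2 ^ s \<le> ln D"
    using assms(1) unfolding large_degree_def Let_def by auto
  moreover have "(1::real) \<le> 2 ^ s" by simp
  ultimately have "0 \<le> ln D" by linarith
  have "1 * 1 \<le> real s * ln (ln D)"
    using assms(2) \<open>1 \<le> ln (ln D)\<close> by (intro mult_mono) auto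
  then have "36 \<le> 36 * s * ln (ln D)" by simp
  then show ?thesis unfolding occupancy_def using \<open>0 \<le> ln D\<close> by (intro divide_left_mono) auto
qed

lemma ln_three_pow_ceiling_le:
  fixes b x :: real
  assumes "1 \<le> b" and "0 \<le> x"
  shows "ln (3 * (x + 1) ^ nat \<lceil>2 * b\<rceil>) \<le> 2 + 3 * b * ln (x + 1)"
proof -
  have "ln (3 :: real) \<le> 2" using ln_le_minus_one[of 3] by simp
  moreover have "real (nat \<lceil>2 * b\<rceil>) \<le> 3 * b" using assms(1) by linarith
  then have "real (nat \<lceil>2 * b\<rceil>) * ln (x + 1) \<le> 3 * b * ln (x + 1)"
    using assms(2) by (intro mult_right_mono) auto
  ultimately show ?thesis using assms(2) by (simp add: ln_mult ln_realpow)
qed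

lemma ceiling_square_pow_le:
  fixes L :: real
  assumes "2 ^ s \<le> L" and "s \<ge> 1"
  shows "real (nat \<lceil>L\<^sup>2\<rceil> ^ (s - 1)) \<le> L ^ (2 * s)"
proof -
  have "(1::real) \<le> 2 ^ s" by simp
  then have "1 \<le> L" using assms(1) by linarith
  then have "1 \<le> L\<^sup>2" by simp
  then have t: "real (nat \<lceil>L\<^sup>2\<rceil>) \<le> 2 * L\<^sup>2" by linarith
  have "(2::real) ^ (s - 1) \<le> 2 ^ s" by (intro power_increasing) auto
  also have "\<dots> \<le> L" by (fact assms(1))
  also have "L \<le> L\<^sup>2" using \<open>1 \<le> L\<close> by (simp add: power2_eq_square)
  finally have "(2::real) ^ (s - 1) \<le> L\<^sup>2" .
  have "real (nat \<lceil>L\<^sup>2\<rceil> ^ (s - 1)) = real (nat \<lceil>L\<^sup>2\<rceil>) ^ (s - 1)" by simp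
  also have "\<dots> \<le> (2 * L\<^sup>2) ^ (s - 1)" using t \<open>1 \<le> L\<^sup>2\<close> by (intro power_mono) auto
  also have "\<dots> = 2 ^ (s - 1) * (L\<^sup>2) ^ (s - 1)" by (simp add: power_mult_distrib)
  also have "\<dots> \<le> L\<^sup>2 * (L\<^sup>2) ^ (s - 1)"
    using \<open>2 ^ (s - 1) \<le> L\<^sup>2\<close> by (intro mult_right_mono) auto
  also have "\<dots> = L ^ (2 * s)"
    using assms(2) by (metis Suc_diff_1 less_le_trans power_Suc power_mult zero_less_one)
  finally show ?thesis .
qed

lemma ln_card_indep_sets_ge:
  fixes L :: real
  assumes sym: "\<forall>x y. E x y \<longrightarrow> E y x" and irr: "\<forall>x. \<not> E x x"
    and fin: "finite X" and noK: "\<not> contains_K E X s"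
    and "s \<ge> 1" and L: "2 ^ s \<le> L" and X: "L ^ (2 * s) < card X"
  shows "L\<^sup>2 / 2 \<le> ln (card (indep_sets E X))"
proof -
  define t where "t = nat \<lceil>L\<^sup>2\<rceil>"
  have "real (t ^ (s - 1)) \<le> real (card X)"
    using ceiling_square_pow_le[OF L \<open>s \<ge> 1\<close>] X unfolding t_def by linarith
  moreover have "\<not> contains_K E X (Suc (s - 1))" using noK \<open>s \<ge> 1\<close> by simp
  ultimately obtain T where "T \<subseteq> X" "indep E T" "t \<le> card T"
    using ramsey_indep_set[OF sym irr fin] by (metis of_nat_le_iff)
  then have "2 ^ t \<le> card (indep_sets E X)"
    using two_pow_card_le_card_indep_sets[OF fin, of T E]
    by (metis indep_sets_def mem_Collect_eq order_trans power_increasing one_le_numeral)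
  then have "(2::real) ^ t \<le> card (indep_sets E X)"
    by (metis of_nat_le_iff of_nat_numeral of_nat_power)
  then have "t * ln 2 \<le> ln (card (indep_sets E X))"
    by (metis ln_le_cancel_iff ln_realpow order_less_le_trans zero_less_numeral zero_less_power)
  moreover have "L\<^sup>2 \<le> real t" unfolding t_def by linarith
  moreover have "real t * (1 / 2) \<le> real t * ln 2"
    using ln_le_minus_one[of "1 / 2"] by (intro mult_left_mono) (auto simp: ln_div)
  ultimately show ?thesis by linarith
qed

lemma ln_three_pow_le_few_vertices:
  fixes D x N :: real
  assumes large: "large_degree s D" and "s \<ge> 1" and "0 \<le> x" and x: "x \<le> (ln D) ^ (2 * s)"
    and N: "D / (2 * occupancy s D) < N"
  shows "ln (3 * (x + 1) ^ nat \<lceil>2 * occupancy s D\<rceil>) \<le> ln N"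
proof -
  define L where "L = ln D"
  define b where "b = occupancy s D"
  have D: "0 < D" "1 \<le> ln L" "2 ^ s \<le> L" "L / 4 + 2 \<le> L - ln 2 - ln L"
    using large unfolding large_degree_def Let_def L_def by auto
  have "(1::real) \<le> 2 ^ s" by simp
  then have "1 \<le> L" using D(3) by linarith
  have b: "1 \<le> b" "b \<le> L / 36"
    using occupancy_ge_one[OF large \<open>s \<ge> 1\<close>] occupancy_le[OF large \<open>s \<ge> 1\<close>]
    unfolding b_def L_def by auto
  have "0 < D / (2 * b)" using D(1) b(1) by simp
  then have "ln (D / (2 * b)) \<le> ln N"
    using N unfolding b_def by (intro ln_le_cancel_iff[THEN iffD2]) auto
  moreover have "ln (D / (2 * b)) = L - ln 2 - ln b"
    using D(1) b(1) by (simp add: ln_div ln_mult L_def)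
  moreover have "ln b \<le> ln L" using b \<open>1 \<le> L\<close> by simp
  ultimately have lnN: "L / 4 + 2 \<le> ln N" using D(4) by linarith
  have "1 \<le> L ^ (2 * s)" using \<open>1 \<le> L\<close> by simp
  then have "ln (x + 1) \<le> ln (2 * L ^ (2 * s))"
    using x \<open>0 \<le> x\<close> unfolding L_def by (intro ln_le_cancel_iff[THEN iffD2]) auto
  also have "\<dots> = ln 2 + 2 * s * ln L" using \<open>1 \<le> L\<close> by (simp add: ln_mult ln_realpow)
  also have "\<dots> \<le> 3 * s * ln L"
    using ln_le_minus_one[of 2] D(2) \<open>s \<ge> 1\<close> mult_mono[of 1 "real s" 1 "ln L"] by simp
  finally have "3 * b * ln (x + 1) \<le> 3 * b * (3 * s * ln L)"
    using b(1) by (intro mult_left_mono) auto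
  also have "\<dots> = L / 4" using D(2) \<open>s \<ge> 1\<close> by (simp add: b_def occupancy_def L_def)
  finally show ?thesis
    using ln_three_pow_ceiling_le[OF b(1) \<open>0 \<le> x\<close>] lnN unfolding b_def by linarith
qed

text \<open>There are at most \<open>(|X| + 1)\<^sup>2\<^sup>b\<close> sets of size below \<open>2b\<close>; the number \<open>N\<close> of independent
  sets exceeds three times that, via \<open>N > D / 2b\<close> if \<open>X\<close> is small and via
  \<open>ln_card_indep_sets_ge\<close> if it is large.\<close>

lemma many_indep_sets:
  fixes D :: real
  assumes sym: "\<forall>x y. E x y \<longrightarrow> E y x" and irr: "\<forall>x. \<not> E x x"
    and fin: "finite X" and cX: "real (card X) \<le> D" and noK: "\<not> contains_K E X s"
    and "s \<ge> 1" and large: "large_degree s D"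
    and many: "D / (2 * occupancy s D) < card (indep_sets E X)"
  shows "3 * (real (card X) + 1) ^ nat \<lceil>2 * occupancy s D\<rceil> \<le> card (indep_sets E X)"
proof -
  define L where "L = ln D"
  define b where "b = occupancy s D"
  define N where "N = real (card (indep_sets E X))"
  define x where "x = real (card X)"
  have D: "0 < D" "2 ^ s \<le> L" "L * (L + 1) / 12 + 2 \<le> L\<^sup>2 / 4" "2 * L \<le> D"
    using large unfolding large_degree_def Let_def L_def by auto
  have b: "1 \<le> b" "b \<le> L / 36"
    using occupancy_ge_one[OF large \<open>s \<ge> 1\<close>] occupancy_le[OF large \<open>s \<ge> 1\<close>]
    unfolding b_def L_def by auto
  have "x \<ge> 0" unfolding x_def by simp
  have "N > 0" using finite_indep_sets[OF fin] empty_in_indep_sets[of E X]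
    unfolding N_def by (auto simp: card_gt_0_iff)
  have "ln (3 * (x + 1) ^ nat \<lceil>2 * b\<rceil>) \<le> ln N"
  proof (cases "x \<le> L ^ (2 * s)")
    case True
    then show ?thesis using ln_three_pow_le_few_vertices[OF large \<open>s \<ge> 1\<close> \<open>x \<ge> 0\<close>] many
      unfolding b_def L_def N_def by simp
  next
    case False
    then have lnN: "L\<^sup>2 / 2 \<le> ln N"
      using ln_card_indep_sets_ge[OF sym irr fin noK \<open>s \<ge> 1\<close> D(2)] unfolding x_def N_def by simp
    have "(1::real) \<le> 2 ^ s" by simp
    then have "1 \<le> D" using D(2,4) by linarith
    then have "ln (x + 1) \<le> ln (2 * D)"
      using \<open>x \<ge> 0\<close> cX unfolding x_def by (intro ln_le_cancel_iff[THEN iffD2]) auto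
    also have "\<dots> \<le> L + 1" using D(1) ln_le_minus_one[of 2] by (simp add: ln_mult L_def)
    finally have "3 * b * ln (x + 1) \<le> 3 * (L / 36) * (L + 1)"
      using b \<open>x \<ge> 0\<close> by (intro mult_mono) auto
    also have "\<dots> = L * (L + 1) / 12" by simp
    finally show ?thesis
      using ln_three_pow_ceiling_le[OF b(1) \<open>x \<ge> 0\<close>] lnN D(3) zero_le_power2[of L] by linarith
  qed
  moreover have "0 < 3 * (x + 1) ^ nat \<lceil>2 * b\<rceil>" using \<open>x \<ge> 0\<close> by simp
  ultimately have "3 * (x + 1) ^ nat \<lceil>2 * b\<rceil> \<le> N" using ln_le_cancel_iff \<open>N > 0\<close> by blast
  then show ?thesis unfolding N_def x_def b_def .
qed

text \<open>Dividing by \<open>1 + N\<close>: if a new vertex \<open>v\<close> is added as one more equally likely outcome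
  to the independent sets \<open>T\<close> of \<open>X\<close>, then \<open>D P(v) + E|T| \<ge> occupancy s D\<close>.\<close>

lemma local_occupancy:
  fixes D :: real
  assumes sym: "\<forall>x y. E x y \<longrightarrow> E y x" and irr: "\<forall>x. \<not> E x x"
    and fin: "finite X" and cX: "real (card X) \<le> D" and noK: "\<not> contains_K E X s"
    and "s \<ge> 1" and large: "large_degree s D"
  shows "occupancy s D * (1 + real (card (indep_sets E X)))
           \<le> D + (\<Sum>T\<in>indep_sets E X. real (card T))"
proof -
  define b where "b = occupancy s D"
  define N where "N = real (card (indep_sets E X))"
  define k where "k = nat \<lceil>2 * b\<rceil>"
  define P where "P = (real (card X) + 1) ^ k"
  have "2 * b \<le> real k" unfolding k_def by linarith
  have D: "0 < D" "2 * ln D \<le> D" using large unfolding large_degree_def Let_def by auto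
  have b: "1 \<le> b" "b \<le> ln D / 36"
    using occupancy_ge_one[OF large \<open>s \<ge> 1\<close>] occupancy_le[OF large \<open>s \<ge> 1\<close>]
    unfolding b_def by auto
  show ?thesis
  proof (cases "b * (1 + N) \<le> D")
    case True
    moreover have "0 \<le> (\<Sum>T\<in>indep_sets E X. real (card T))" by (rule sum_nonneg) simp
    ultimately show ?thesis unfolding b_def N_def by linarith
  next
    case False
    have "72 * b \<le> D" using b D by linarith
    then have "D / (2 * b) < N" using False b(1) by (simp add: field_simps)
    then have N: "3 * P \<le> N"
      using many_indep_sets[OF sym irr fin cX noK \<open>s \<ge> 1\<close> large]
      unfolding b_def N_def k_def P_def by simp
    moreover have "1 \<le> P" by (simp add: P_def)
    ultimately have "1 + N \<le> 2 * (N - P)" by (simp add: algebra_simps)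
    then have "b * (1 + N) \<le> 2 * b * (N - P)"
      using b(1) mult_left_mono[of "1 + N" _ b] by simp
    also have "\<dots> \<le> real k * (N - P)"
      using N \<open>1 \<le> P\<close> \<open>2 * b \<le> real k\<close> by (intro mult_right_mono) auto
    also have "\<dots> \<le> (\<Sum>T\<in>indep_sets E X. real (card T))"
      using sum_card_indep_sets_ge[OF fin] unfolding N_def P_def .
    finally show ?thesis using D(1) unfolding b_def N_def by linarith
  qed
qed

section \<open>The occupancy method\<close>

text \<open>Summed over all independent sets \<open>I\<close>, this is \<open>#I\<close> times
  \<open>D P(v \<in> I) + E|I \<inter> N(v)|\<close> for the uniformly random independent set.\<close>

definition vertex_weight :: "(nat \<Rightarrow> nat \<Rightarrow> bool) \<Rightarrow> real \<Rightarrow> nat \<Rightarrow> nat set \<Rightarrow> real" where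
  "vertex_weight E D v I = D * of_bool (v \<in> I) + real (card (I \<inter> {u. E v u}))"

lemma sum_ge_by_fibres:
  fixes g :: "'a \<Rightarrow> real" and b :: real
  assumes fin: "finite A"
    and fibre: "\<And>y. y \<in> h ` A \<Longrightarrow> b * card {x\<in>A. h x = y} \<le> (\<Sum>x\<in>{x\<in>A. h x = y}. g x)"
  shows "b * card A \<le> sum g A"
proof -
  have "b * card A = (\<Sum>y\<in>h ` A. \<Sum>x\<in>{x\<in>A. h x = y}. b)"
    using sum.group[of A "h ` A" h "\<lambda>_. b"] fin by (simp add: mult.commute)
  also have "\<dots> \<le> (\<Sum>y\<in>h ` A. \<Sum>x\<in>{x\<in>A. h x = y}. g x)"
  proof (rule sum_mono)
    fix y assume "y \<in> h ` A"
    then show "(\<Sum>x\<in>{x\<in>A. h x = y}. b) \<le> (\<Sum>x\<in>{x\<in>A. h x = y}. g x)"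
      using fibre[of y] by (simp add: mult.commute)
  qed
  also have "\<dots> = sum g A" using sum.group[of A "h ` A" h g] fin by simp
  finally show ?thesis .
qed

lemma indep_sets_fibre:
  assumes sym: "\<forall>x y. E x y \<longrightarrow> E y x" and irr: "\<forall>x. \<not> E x x"
    and "v \<in> V" and NV: "{u. E v u} \<subseteq> V"
    and J: "J \<in> indep_sets E V" and Jv: "J \<inter> insert v {u. E v u} = {}"
  defines "X \<equiv> {u. E v u \<and> (\<forall>j\<in>J. \<not> E u j)}"
  shows "{I \<in> indep_sets E V. I - insert v {u. E v u} = J}
           = insert (insert v J) ((\<union>) J ` indep_sets E X)"
    and "insert v J \<notin> (\<union>) J ` indep_sets E X"
    and "inj_on ((\<union>) J) (indep_sets E X)"
proof -
  have JV: "J \<subseteq> V" and Jind: "indep E J" using J unfolding indep_sets_def by auto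
  have XJ: "T \<inter> J = {}" "v \<notin> T" if "T \<in> indep_sets E X" for T
    using that Jv irr unfolding indep_sets_def X_def by auto
  show "{I \<in> indep_sets E V. I - insert v {u. E v u} = J}
          = insert (insert v J) ((\<union>) J ` indep_sets E X)"
  proof (intro equalityI subsetI)
    fix I assume "I \<in> {I \<in> indep_sets E V. I - insert v {u. E v u} = J}"
    then have I: "I \<subseteq> V" "indep E I" "I - insert v {u. E v u} = J"
      unfolding indep_sets_def by auto
    show "I \<in> insert (insert v J) ((\<union>) J ` indep_sets E X)"
    proof (cases "v \<in> I")
      case True
      then have "I \<inter> {u. E v u} = {}" using I(2) unfolding indep_def by blast
      then have "I = insert v J" using True I(3) by blast
      then show ?thesis by simp
    next
      case False
      then have "I = J \<union> (I \<inter> {u. E v u})" using I(3) by blast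
      moreover have "I \<inter> {u. E v u} \<subseteq> X"
        using I(2,3) sym unfolding X_def indep_def by blast
      then have "I \<inter> {u. E v u} \<in> indep_sets E X"
        using I(2) unfolding indep_sets_def indep_def by blast
      ultimately show ?thesis by blast
    qed
  next
    fix I assume "I \<in> insert (insert v J) ((\<union>) J ` indep_sets E X)"
    then consider "I = insert v J" | T where "T \<in> indep_sets E X" "I = J \<union> T" by blast
    then show "I \<in> {I \<in> indep_sets E V. I - insert v {u. E v u} = J}"
    proof cases
      case 1
      have "indep E (insert v J)" using Jind Jv sym irr unfolding indep_def by blast
      moreover have "insert v J \<subseteq> V" using JV \<open>v \<in> V\<close> by blast
      moreover have "insert v J - insert v {u. E v u} = J" using Jv by blast
      ultimately show ?thesis using 1 unfolding indep_sets_def by blast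
    next
      case 2
      then have T: "T \<subseteq> X" "indep E T" unfolding indep_sets_def by auto
      have "indep E (J \<union> T)" using Jind T sym unfolding indep_def X_def by blast
      moreover have "J \<union> T \<subseteq> V" using JV T(1) NV unfolding X_def by blast
      moreover have "J \<union> T - insert v {u. E v u} = J" using Jv T(1) unfolding X_def by blast
      ultimately show ?thesis using 2(2) unfolding indep_sets_def by blast
    qed
  qed
  show "insert v J \<notin> (\<union>) J ` indep_sets E X"
  proof
    assume "insert v J \<in> (\<union>) J ` indep_sets E X"
    then obtain T where "T \<in> indep_sets E X" "insert v J = J \<union> T" by blast
    moreover have "v \<notin> J" using Jv by blast
    ultimately show False using XJ(2) by blast
  qed
  show "inj_on ((\<union>) J) (indep_sets E X)" using XJ by (intro inj_onI) blast
qed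

lemma occupancy_at_vertex:
  fixes D :: real
  assumes sg: "simple_graph n E" and noK: "\<not> contains_K E {0..<n} (Suc s)"
    and "v < n" and deg: "real (card {u. E v u}) \<le> D"
    and "s \<ge> 1" and large: "large_degree s D"
  shows "occupancy s D * card (indep_sets E {0..<n})
           \<le> (\<Sum>I\<in>indep_sets E {0..<n}. vertex_weight E D v I)"
proof (rule sum_ge_by_fibres)
  define V where "V = {0..<n}"
  have sym: "\<forall>x y. E x y \<longrightarrow> E y x" and irr: "\<forall>x. \<not> E x x" and NV: "{u. E v u} \<subseteq> V"
    using sg unfolding simple_graph_def V_def by auto
  fix J assume "J \<in> (\<lambda>I. I - insert v {u. E v u}) ` indep_sets E {0..<n}"
  then have J: "J \<in> indep_sets E V" "J \<inter> insert v {u. E v u} = {}"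
    unfolding indep_sets_def indep_def V_def by auto
  define X where "X = {u. E v u \<and> (\<forall>j\<in>J. \<not> E u j)}"
  have "v \<in> V" using \<open>v < n\<close> by (simp add: V_def)
  note fibre = indep_sets_fibre[OF sym irr \<open>v \<in> V\<close> NV J, folded X_def]
  have XN: "X \<subseteq> {u. E v u}" by (auto simp: X_def)
  have fin: "finite X"
    using XN NV unfolding V_def by (meson finite_atLeastLessThan finite_subset subset_trans)
  have "real (card X) \<le> D"
    using card_mono[OF finite_subset[OF NV] XN] deg by (force simp: V_def)
  moreover have "\<not> contains_K E X s"
    using not_contains_K_neighbourhood[OF sym irr \<open>v \<in> V\<close> _ noK[folded V_def]] XN NV by blast
  ultimately have local: "occupancy s D * (1 + real (card (indep_sets E X)))
      \<le> D + (\<Sum>T\<in>indep_sets E X. real (card T))"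
    using local_occupancy[OF sym irr fin _ _ \<open>s \<ge> 1\<close> large] by blast
  have "vertex_weight E D v (J \<union> T) = real (card T)" if "T \<in> indep_sets E X" for T
  proof -
    have "v \<notin> J \<union> T" "(J \<union> T) \<inter> {u. E v u} = T"
      using that J(2) XN irr unfolding indep_sets_def by auto
    then show ?thesis by (simp add: vertex_weight_def)
  qed
  moreover have "D \<le> vertex_weight E D v (insert v J)" by (simp add: vertex_weight_def)
  moreover have "card {I \<in> indep_sets E V. I - insert v {u. E v u} = J}
      = 1 + card (indep_sets E X)"
    using fibre finite_indep_sets[OF fin] by (simp add: card_image)
  ultimately show "occupancy s D * card {I \<in> indep_sets E {0..<n}. I - insert v {u. E v u} = J}
      \<le> (\<Sum>I\<in>{I \<in> indep_sets E {0..<n}. I - insert v {u. E v u} = J}. vertex_weight E D v I)"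
    using local fibre finite_indep_sets[OF fin] by (simp add: sum.reindex V_def)
qed (simp add: finite_indep_sets)

lemma sum_vertex_weight_le:
  fixes D :: real
  assumes sg: "simple_graph n E" and deg: "\<forall>v<n. real (card {u. E v u}) \<le> D"
    and I: "I \<subseteq> {0..<n}"
  shows "(\<Sum>v<n. vertex_weight E D v I) \<le> 2 * D * card I"
proof -
  have sym: "\<forall>x y. E x y \<longrightarrow> E y x" and inV: "\<forall>x y. E x y \<longrightarrow> x < n \<and> y < n"
    using sg unfolding simple_graph_def by auto
  have "finite I" using I finite_subset by blast
  have self: "(\<Sum>v<n. D * of_bool (v \<in> I)) = D * card I"
    using I by (simp add: sum_distrib_left[symmetric] Int_absorb1 lessThan_atLeast0)
  have "(\<Sum>v<n. real (card (I \<inter> {u. E v u}))) = (\<Sum>v<n. \<Sum>u\<in>I. of_bool (E v u))"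
    using \<open>finite I\<close> by (simp add: Int_def)
  also have "\<dots> = (\<Sum>u\<in>I. \<Sum>v<n. of_bool (E v u))" by (rule sum.swap)
  also have "\<dots> = (\<Sum>u\<in>I. real (card {v. E u v}))"
  proof (rule sum.cong)
    fix u
    have "{..<n} \<inter> {v. E v u} = {v. E u v}" using sym inV by auto
    then show "(\<Sum>v<n. of_bool (E v u)) = real (card {v. E u v})" by (simp add: Int_def)
  qed simp
  also have "\<dots> \<le> (\<Sum>u\<in>I. D)" using deg I by (intro sum_mono) auto
  finally have "(\<Sum>v<n. real (card (I \<inter> {u. E v u}))) \<le> D * card I"
    by (simp add: mult.commute)
  moreover have "(\<Sum>v<n. vertex_weight E D v I)
      = (\<Sum>v<n. D * of_bool (v \<in> I)) + (\<Sum>v<n. real (card (I \<inter> {u. E v u})))"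
    by (simp add: vertex_weight_def sum.distrib)
  ultimately show ?thesis using self by linarith
qed

text \<open>Summing \<open>occupancy_at_vertex\<close> over all vertices and \<open>sum_vertex_weight_le\<close> over all
  independent sets shows that some independent set is at least average.\<close>

lemma exists_large_indep_set:
  fixes D :: real
  assumes sg: "simple_graph n E" and noK: "\<not> contains_K E {0..<n} (Suc s)"
    and deg: "\<forall>v<n. real (card {u. E v u}) \<le> D"
    and "s \<ge> 1" and large: "large_degree s D"
  shows "\<exists>I\<subseteq>{0..<n}. indep E I \<and> n * occupancy s D \<le> 2 * D * card I"
proof (rule ccontr)
  define \<I> where "\<I> = indep_sets E {0..<n}"
  assume "\<not> ?thesis"
  then have small: "2 * D * card I < n * occupancy s D" if "I \<in> \<I>" for I
    using that unfolding \<I>_def indep_sets_def by auto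
  have "n * occupancy s D * card \<I> = (\<Sum>v<n. occupancy s D * card \<I>)" by simp
  also have "\<dots> \<le> (\<Sum>v<n. \<Sum>I\<in>\<I>. vertex_weight E D v I)"
    using occupancy_at_vertex[OF sg noK _ _ \<open>s \<ge> 1\<close> large] deg
    unfolding \<I>_def by (intro sum_mono) auto
  also have "\<dots> = (\<Sum>I\<in>\<I>. \<Sum>v<n. vertex_weight E D v I)" by (rule sum.swap)
  also have "\<dots> \<le> (\<Sum>I\<in>\<I>. 2 * D * card I)"
    using sum_vertex_weight_le[OF sg deg] unfolding \<I>_def indep_sets_def by (intro sum_mono) auto
  also have "\<dots> < (\<Sum>I\<in>\<I>. n * occupancy s D)"
    using small finite_indep_sets[of "{0..<n}" E] empty_in_indep_sets[of E "{0..<n}"]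
    unfolding \<I>_def by (intro sum_strict_mono) auto
  finally show False by simp
qed

lemma exists_large_Ks_free_set:
  fixes D :: real
  assumes sg: "simple_graph n E" and noK: "\<not> contains_K E {0..<n} (Suc s)"
    and "s \<ge> 2" and large: "large_degree s D"
  shows "\<exists>W\<subseteq>{0..<n}. \<not> contains_K E W s \<and> (D \<le> card W \<or> n * occupancy s D \<le> 2 * D * card W)"
proof (cases "\<exists>v<n. D < card {u. E v u}")
  case True
  then obtain v where v: "v < n" "D < card {u. E v u}" by blast
  have sym: "\<forall>x y. E x y \<longrightarrow> E y x" and irr: "\<forall>x. \<not> E x x"
    and N: "{u. E v u} \<subseteq> {0..<n}"
    using sg unfolding simple_graph_def by auto
  have "\<not> contains_K E {u. E v u} s"
    using not_contains_K_neighbourhood[OF sym irr _ _ noK] v(1) N by auto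
  then show ?thesis using N v(2) by (intro exI[of _ "{u. E v u}"]) auto
next
  case False
  then have "\<forall>v<n. real (card {u. E v u}) \<le> D" by (metis not_less)
  then obtain I where "I \<subseteq> {0..<n}" "indep E I" "n * occupancy s D \<le> 2 * D * card I"
    using exists_large_indep_set[OF sg noK _ _ large] \<open>s \<ge> 2\<close> by auto
  then show ?thesis using indep_not_contains_K \<open>s \<ge> 2\<close> by blast
qed

section \<open>The extremal function\<close>

lemma finite_Ks_free_cards: "finite {card W | W. W \<subseteq> {0..<n} \<and> \<not> contains_K E W s}"
proof (rule finite_subset)
  show "{card W | W. W \<subseteq> {0..<n} \<and> \<not> contains_K E W s} \<subseteq> {..n}"
    by (auto dest: card_mono[rotated])
qed simp

lemma card_le_max_Ks_free:
  assumes "W \<subseteq> {0..<n}" and "\<not> contains_K E W s"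
  shows "card W \<le> max_Ks_free n E s"
  unfolding max_Ks_free_def using assms finite_Ks_free_cards by (intro Max_ge) auto

lemma max_Ks_free_le:
  assumes "s \<ge> 1"
  shows "max_Ks_free n E s \<le> n"
proof -
  have "\<not> contains_K E {} s" using assms unfolding contains_K_def by auto
  then have "{card W | W. W \<subseteq> {0..<n} \<and> \<not> contains_K E W s} \<noteq> {}" by blast
  then show ?thesis
    unfolding max_Ks_free_def using finite_Ks_free_cards
    by (auto simp: Max_le_iff dest: card_mono[rotated])
qed

lemma f2_attained:
  assumes "s \<ge> 1" and "t \<ge> 2"
  shows "\<exists>E. simple_graph n E \<and> \<not> contains_K E {0..<n} t \<and> f2 s t n = max_Ks_free n E s"
proof -
  define S where "S = {max_Ks_free n E s | E. simple_graph n E \<and> \<not> contains_K E {0..<n} t}"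
  have "finite S"
    by (rule finite_subset[of _ "{..n}"]) (use max_Ks_free_le[OF assms(1)] in \<open>auto simp: S_def\<close>)
  moreover have "simple_graph n (\<lambda>_ _. False)" by (simp add: simple_graph_def)
  moreover have "\<not> contains_K (\<lambda>_ _. False) {0..<n} t"
    using indep_not_contains_K assms(2) by (simp add: indep_def)
  ultimately have "Min S \<in> S" unfolding S_def by (intro Min_in) auto
  then show ?thesis unfolding S_def f2_def by auto
qed

lemma f2_ge_at_large_degree:
  fixes D :: real
  assumes "s \<ge> 2" and large: "large_degree s D"
    and D: "D\<^sup>2 \<le> 4 * real n * ln D / ln (ln D)"
  shows "D / (288 * s) \<le> f2 s (Suc s) n"
proof -
  obtain E where E: "simple_graph n E" "\<not> contains_K E {0..<n} (Suc s)"
    "f2 s (Suc s) n = max_Ks_free n E s"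
    using f2_attained[of s "Suc s" n] \<open>s \<ge> 2\<close> by auto
  obtain W where W: "W \<subseteq> {0..<n}" "\<not> contains_K E W s"
    "D \<le> card W \<or> n * occupancy s D \<le> 2 * D * card W"
    using exists_large_Ks_free_set[OF E(1,2) \<open>s \<ge> 2\<close> large] by blast
  have pos: "0 < D" "0 < ln (ln D)" using large unfolding large_degree_def Let_def by auto
  have "D / (288 * s) \<le> card W"
    using W(3)
  proof
    assume "D \<le> card W"
    moreover have "D / (288 * s) \<le> D" using pos \<open>s \<ge> 2\<close> by (simp add: field_simps)
    ultimately show ?thesis by linarith
  next
    assume W3: "n * occupancy s D \<le> 2 * D * card W"
    have "D * D \<le> 4 * (n * ln D / ln (ln D))" using D by (simp add: power2_eq_square)
    then have "D * D / (144 * s) \<le> 4 * (n * ln D / ln (ln D)) / (144 * s)"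
      using \<open>s \<ge> 2\<close> by (intro divide_right_mono) auto
    also have "\<dots> = n * occupancy s D" by (simp add: occupancy_def)
    finally have "D * D / (144 * s) \<le> 2 * D * card W" using W3 by linarith
    have "D * (D / (288 * s)) = D * D / (144 * s) / 2" by simp
    also have "\<dots> \<le> 2 * D * card W / 2"
      using \<open>D * D / (144 * s) \<le> 2 * D * card W\<close> by (rule divide_right_mono) simp
    finally have "D * (D / (288 * s)) \<le> D * card W" by simp
    then show ?thesis using pos(1) by (rule mult_left_le_imp_le)
  qed
  also have "\<dots> \<le> f2 s (Suc s) n" using card_le_max_Ks_free[OF W(1,2)] E(3) by simp
  finally show ?thesis .
qed

section \<open>Asymptotics\<close>

lemma eventually_large_degree: "eventually (large_degree s) at_top"
proof -
  have "eventually (\<lambda>L::real. 1 \<le> ln L \<and> 2 ^ s \<le> L \<and> 5184 * s\<^sup>2 \<le> L \<and>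
      L / 4 + 2 \<le> L - ln 2 - ln L \<and> L * (L + 1) / 12 + 2 \<le> L\<^sup>2 / 4) at_top"
    by (intro eventually_conj eventually_ge_at_top; real_asymp)
  then have "eventually (\<lambda>D. 1 \<le> ln (ln D) \<and> 2 ^ s \<le> ln D \<and> 5184 * s\<^sup>2 \<le> ln D \<and>
      ln D / 4 + 2 \<le> ln D - ln 2 - ln (ln D) \<and> ln D * (ln D + 1) / 12 + 2 \<le> (ln D)\<^sup>2 / 4) at_top"
    by (rule eventually_compose_filterlim[OF _ ln_at_top])
  moreover have "eventually (\<lambda>D::real. 0 < D \<and> 2 * ln D \<le> D) at_top"
    by (intro eventually_conj; real_asymp)
  ultimately show ?thesis unfolding large_degree_def Let_def by eventually_elim auto
qed

theorem mainTheorem3: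
  fixes s :: nat
  assumes "s \<ge> 3"
  shows "\<exists>c::real. c > 0 \<and> (\<exists>N. \<forall>n\<ge>N.
           real (f2 s (s + 1) n) \<ge> c * sqrt (real n * ln (real n) / ln (ln (real n))))"
proof -
  define D where "D x = sqrt (x * ln x / ln (ln x))" for x :: real
  have "filterlim D at_top at_top" unfolding D_def by real_asymp
  then have "eventually (\<lambda>x. large_degree s (D x)) at_top"
    by (rule eventually_compose_filterlim[OF eventually_large_degree])
  moreover have "eventually (\<lambda>x. (D x)\<^sup>2 \<le> 4 * x * ln (D x) / ln (ln (D x))) at_top"
    unfolding D_def by real_asymp
  ultimately have "eventually (\<lambda>n. large_degree s (D (real n)) \<and>
      (D (real n))\<^sup>2 \<le> 4 * real n * ln (D (real n)) / ln (ln (D (real n)))) sequentially"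
    by (intro eventually_compose_filterlim[OF _ filterlim_real_sequentially] eventually_conj)
  then obtain N where N: "\<And>n. n \<ge> N \<Longrightarrow> D (real n) / (288 * s) \<le> f2 s (Suc s) n"
    using f2_ge_at_large_degree[of s] assms unfolding eventually_sequentially by auto
  show ?thesis
  proof (intro exI[of _ "1 / (288 * real s)"] conjI exI[of _ N] allI impI)
    show "0 < 1 / (288 * real s)" using assms by simp
    fix n assume "N \<le> n"
    then show "1 / (288 * real s) * sqrt (real n * ln (real n) / ln (ln (real n)))
        \<le> real (f2 s (s + 1) n)"
      using N[of n] unfolding D_def by simp
  qed
qed

end
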